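(* Let $n,d,a$ be positive integers. If $n\in\Gamma(d)$ and $a\notin\Gamma(d)$, then the triple $(n,d,a)$ is bad.
   Context: Let $R=\mathbb{C}[x_1,\dots,x_n]$ with $\mathfrak{S}_n$ permuting the variables and $R_a^{\mathfrak{S}_n}$ the symmetric polynomials homogeneous of degree $a$. A triple $(n,d,a)$ of positive integers is good if there exists $f\in R_a^{\mathfrak{S}_n}$ such that $x_1^d-x_n^d,\dots,x_{n-1}^d-x_n^d,f$ is a regular sequence (equivalently, $f$ has no zero on $\mathcal{V}_d=\{(z_1,\dots,z_n)\in\mathbb{C}^n: z_i^d=1\ \forall i,\ z_n=1\}$); otherwise it is bad. For a positive integer $m$, $\Gamma(m)$ is the numerical semigroup generated by the prime divisors of $m$, with $\Gamma(1)=\{0\}$. *)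

theory Defs
  imports Complex_Main "HOL-Combinatorics.Permutations" "HOL-Computational_Algebra.Primes"
begin

text \<open>Points of C^n are functions nat => complex (coordinates indexed 0..n-1, zero beyond).
  A polynomial in R_a (homogeneous of degree a in n variables) is given by its coefficient
  function on exponent vectors; only exponent vectors in hmonos n a matter.\<close>

definition hmonos :: "nat \<Rightarrow> nat \<Rightarrow> (nat \<Rightarrow> nat) set" where
  "hmonos n a = {\<alpha>. (\<forall>i\<ge>n. \<alpha> i = 0) \<and> (\<Sum>i<n. \<alpha> i) = a}"

definition hpoly_eval :: "nat \<Rightarrow> nat \<Rightarrow> ((nat \<Rightarrow> nat) \<Rightarrow> complex) \<Rightarrow> (nat \<Rightarrow> complex) \<Rightarrow> complex" where
  "hpoly_eval n a c z = (\<Sum>\<alpha>\<in>hmonos n a. c \<alpha> * (\<Prod>i<n. z i ^ \<alpha> i))"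

definition hpoly_symmetric :: "nat \<Rightarrow> nat \<Rightarrow> ((nat \<Rightarrow> nat) \<Rightarrow> complex) \<Rightarrow> bool" where
  "hpoly_symmetric n a c \<longleftrightarrow>
     (\<forall>\<sigma> \<alpha>. \<sigma> permutes {..<n} \<longrightarrow> \<alpha> \<in> hmonos n a \<longrightarrow> c (\<alpha> \<circ> \<sigma>) = c \<alpha>)"

definition V :: "nat \<Rightarrow> nat \<Rightarrow> (nat \<Rightarrow> complex) set" where
  "V n d = {z. (\<forall>i<n. z i ^ d = 1) \<and> z (n - 1) = 1 \<and> (\<forall>i\<ge>n. z i = 0)}"

definition good_triple :: "nat \<Rightarrow> nat \<Rightarrow> nat \<Rightarrow> bool" where
  "good_triple n d a \<longleftrightarrow>
     (\<exists>c. hpoly_symmetric n a c \<and> (\<forall>z\<in>V n d. hpoly_eval n a c z \<noteq> 0))"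

definition bad_triple :: "nat \<Rightarrow> nat \<Rightarrow> nat \<Rightarrow> bool" where
  "bad_triple n d a \<longleftrightarrow> \<not> good_triple n d a"

text \<open>Numerical semigroup generated by the prime divisors of m (Gamma 1 = {0}).\<close>
definition Gamma :: "nat \<Rightarrow> nat set" where
  "Gamma m = {k. \<exists>g::nat \<Rightarrow> nat. k = (\<Sum>p\<in>prime_factors m. g p * p)}"

end

theory Submission
  imports Defs "HOL-Analysis.Complex_Transcendental" "HOL-Number_Theory.Cong"
begin

text \<open>Write \<open>n = p\<^sub>1 + \<dots> + p\<^sub>m\<close> with primes \<open>p\<^sub>j\<close> dividing \<open>d\<close>, and let \<open>z\<close> list, block after
  block, all \<open>p\<^sub>j\<close>-th roots of unity, each block ending with \<open>1\<close>; then \<open>z \<in> V n d\<close>.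
  Rotating the entries inside the blocks permutes the coordinates, so a symmetric \<open>f\<close>
  has the same value at all rotated points, while a monomial with block degrees
  \<open>A\<^sub>1, \<dots>, A\<^sub>m\<close> gets multiplied by the character \<open>\<Prod>\<^sub>j \<zeta>\<^sub>j\<^bsup>t\<^sub>j A\<^sub>j\<^esup>\<close> of the rotation group.
  Averaging over the group kills every monomial for which some \<open>p\<^sub>j\<close> does not divide
  \<open>A\<^sub>j\<close>; since \<open>\<Sum>\<^sub>j A\<^sub>j = a \<notin> \<Gamma>(d)\<close>, these are all monomials, so \<open>f(z) = 0\<close>.\<close>

definition zeta :: "nat \<Rightarrow> complex" where
  "zeta p = exp (2 * of_real pi * \<i> / of_nat p)"

lemma zeta_pow_eq_1_iff:
  assumes "0 < p"
  shows "zeta p ^ j = 1 \<longleftrightarrow> p dvd j"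
proof -
  have "zeta p ^ j = exp (2 * of_real pi * \<i> * of_nat j / of_nat p)"
    unfolding zeta_def exp_of_nat_mult[symmetric] by (simp add: field_simps)
  then show ?thesis
    using complex_root_unity_eq_1[of p j] assms by simp
qed

lemma zeta_pow_mod:
  assumes "0 < p"
  shows "zeta p ^ (j mod p) = zeta p ^ j"
proof -
  have "zeta p ^ j = zeta p ^ (p * (j div p) + j mod p)"
    by simp
  also have "\<dots> = (zeta p ^ p) ^ (j div p) * zeta p ^ (j mod p)"
    by (simp only: power_add power_mult)
  also have "\<dots> = zeta p ^ (j mod p)"
    using zeta_pow_eq_1_iff[OF assms, of p] by simp
  finally show ?thesis
    by (rule sym)
qed

lemma sum_zeta_pow_mult_eq_0:
  assumes "0 < p" and "\<not> p dvd A"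
  shows "(\<Sum>u<p. zeta p ^ (u * A)) = 0"
proof -
  have "zeta p ^ A \<noteq> 1" and "(zeta p ^ A) ^ p = 1"
    using zeta_pow_eq_1_iff[OF assms(1)] assms(2) by (simp_all flip: power_mult)
  then show ?thesis
    using sum_gp_strict[of "zeta p ^ A" p] by (simp add: mult.commute[of _ A] power_mult)
qed

lemma GammaI: "k = (\<Sum>q\<in>prime_factors d. g q * q) \<Longrightarrow> k \<in> Gamma d"
  unfolding Gamma_def by blast

lemma zero_in_Gamma: "0 \<in> Gamma d"
  by (rule GammaI[where g = "\<lambda>_. 0"]) simp

lemma Gamma_add:
  assumes "x \<in> Gamma d" and "y \<in> Gamma d"
  shows "x + y \<in> Gamma d"
proof -
  obtain g g' where "x = (\<Sum>q\<in>prime_factors d. g q * q)" and "y = (\<Sum>q\<in>prime_factors d. g' q * q)"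
    using assms unfolding Gamma_def by blast
  then have "x + y = (\<Sum>q\<in>prime_factors d. (g q + g' q) * q)"
    by (simp add: distrib_right sum.distrib)
  then show ?thesis
    by (rule GammaI)
qed

lemma mult_prime_factor_in_Gamma:
  assumes "q \<in> prime_factors d"
  shows "k * q \<in> Gamma d"
proof -
  have "(\<Sum>r\<in>prime_factors d. (if r = q then k else 0) * r) = (\<Sum>r\<in>prime_factors d. if q = r then k * q else 0)"
    by (intro sum.cong) auto
  also have "\<dots> = k * q"
    using assms by simp
  finally show ?thesis
    by (rule GammaI[OF sym])
qed

lemma sum_in_Gamma:
  assumes "\<And>j. j \<in> J \<Longrightarrow> q j \<in> prime_factors d \<and> q j dvd A j"
  shows "(\<Sum>j\<in>J. A j) \<in> Gamma d"
  using assms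
proof (induction J rule: infinite_finite_induct)
  case (insert j J)
  have "A j \<in> Gamma d"
    using mult_prime_factor_in_Gamma[of "q j" d "A j div q j"] insert.prems by simp
  then show ?case
    using insert Gamma_add by simp
qed (simp_all add: zero_in_Gamma)

lemma Gamma_sum_listE:
  assumes "k \<in> Gamma d"
  obtains ps where "set ps \<subseteq> prime_factors d" and "sum_list ps = k"
proof -
  obtain g where k: "k = (\<Sum>q\<in>prime_factors d. g q * q)"
    using assms unfolding Gamma_def by blast
  define qs where "qs = sorted_list_of_set (prime_factors d)"
  define ps where "ps = concat (map (\<lambda>q. replicate (g q) q) qs)"
  have "sum_list ps = sum_list (map (\<lambda>q. g q * q) qs)"
    unfolding ps_def by (induction qs) (simp_all add: sum_list_replicate)
  also have "\<dots> = k"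
    unfolding k qs_def by (simp add: sum_list_distinct_conv_sum_set)
  moreover have "set ps \<subseteq> prime_factors d"
    by (auto simp: ps_def qs_def)
  ultimately show ?thesis
    using that by blast
qed

lemma hmonos_comp_permutes:
  assumes "\<alpha> \<in> hmonos n a" and "\<sigma> permutes {..<n}"
  shows "\<alpha> \<circ> \<sigma> \<in> hmonos n a"
  using assms sum.permute[OF assms(2), of \<alpha>] permutes_not_in[OF assms(2)]
  by (auto simp: hmonos_def)

lemma hpoly_symmetricD:
  "hpoly_symmetric n a c \<Longrightarrow> \<sigma> permutes {..<n} \<Longrightarrow> \<alpha> \<in> hmonos n a \<Longrightarrow> c (\<alpha> \<circ> \<sigma>) = c \<alpha>"
  unfolding hpoly_symmetric_def by blast

lemma hpoly_eval_comp_permutes: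
  assumes "hpoly_symmetric n a c" and \<sigma>: "\<sigma> permutes {..<n}"
  shows "hpoly_eval n a c (z \<circ> \<sigma>) = hpoly_eval n a c z"
  unfolding hpoly_eval_def
proof (rule sum.reindex_bij_witness[where i = "\<lambda>\<beta>. \<beta> \<circ> \<sigma>" and j = "\<lambda>\<alpha>. \<alpha> \<circ> inv \<sigma>"])
  have inv: "inv \<sigma> permutes {..<n}"
    using \<sigma> by (rule permutes_inv)
  show "\<beta> \<circ> \<sigma> \<circ> inv \<sigma> = \<beta>" "\<beta> \<circ> inv \<sigma> \<circ> \<sigma> = \<beta>" for \<beta> :: "nat \<Rightarrow> nat"
    using permutes_inverses[OF \<sigma>] by (auto simp: fun_eq_iff)
  show "\<beta> \<circ> \<sigma> \<in> hmonos n a" "\<beta> \<circ> inv \<sigma> \<in> hmonos n a" if "\<beta> \<in> hmonos n a" for \<beta>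
    using hmonos_comp_permutes that \<sigma> inv by auto
  show "c (\<alpha> \<circ> inv \<sigma>) * (\<Prod>i<n. z i ^ (\<alpha> \<circ> inv \<sigma>) i) = c \<alpha> * (\<Prod>i<n. (z \<circ> \<sigma>) i ^ \<alpha> i)"
    if \<alpha>: "\<alpha> \<in> hmonos n a" for \<alpha>
  proof -
    have "c (\<alpha> \<circ> inv \<sigma>) = c \<alpha>"
      by (rule hpoly_symmetricD[OF assms(1) inv \<alpha>])
    moreover have "(\<Prod>i<n. z i ^ (\<alpha> \<circ> inv \<sigma>) i) = (\<Prod>i<n. z (\<sigma> i) ^ \<alpha> i)"
      using prod.permute[OF \<sigma>, of "\<lambda>i. z i ^ (\<alpha> \<circ> inv \<sigma>) i"]
      by (simp add: permutes_inverses(2)[OF \<sigma>])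
    ultimately show ?thesis
      by simp
  qed
qed

lemma hpoly_eval_eq_0_if_orbit_sums_eq_0:
  assumes sym: "hpoly_symmetric n a c"
    and T: "finite T" "T \<noteq> {}"
    and \<sigma>: "\<And>t. t \<in> T \<Longrightarrow> \<sigma> t permutes {..<n}"
    and orbit_sum: "\<And>\<alpha>. \<alpha> \<in> hmonos n a \<Longrightarrow> (\<Sum>t\<in>T. \<Prod>i<n. z (\<sigma> t i) ^ \<alpha> i) = 0"
  shows "hpoly_eval n a c z = 0"
proof -
  have "(\<Sum>t\<in>T. hpoly_eval n a c (z \<circ> \<sigma> t)) = (\<Sum>t\<in>T. hpoly_eval n a c z)"
    using hpoly_eval_comp_permutes[OF sym \<sigma>] by (rule sum.cong[OF refl])
  then have "of_nat (card T) * hpoly_eval n a c z = (\<Sum>t\<in>T. hpoly_eval n a c (z \<circ> \<sigma> t))"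
    by simp
  also have "\<dots> = (\<Sum>\<alpha>\<in>hmonos n a. c \<alpha> * (\<Sum>t\<in>T. \<Prod>i<n. z (\<sigma> t i) ^ \<alpha> i))"
    unfolding hpoly_eval_def by (subst sum.swap) (simp add: sum_distrib_left)
  also have "\<dots> = 0"
    using orbit_sum by simp
  finally show ?thesis
    using T by simp
qed

locale prime_factor_blocks =
  fixes d m :: nat and p :: "nat \<Rightarrow> nat"
  assumes block_prime_factor: "j < m \<Longrightarrow> p j \<in> prime_factors d"
begin

lemma block_pos: "j < m \<Longrightarrow> 0 < p j"
  using block_prime_factor by (auto simp: in_prime_factors_iff prime_gt_0_nat)

lemma block_dvd: "j < m \<Longrightarrow> p j dvd d"
  using block_prime_factor by (auto simp: in_prime_factors_iff)

definition start :: "nat \<Rightarrow> nat" where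
  "start j = (\<Sum>l<j. p l)"

abbreviation dim :: nat where
  "dim \<equiv> start m"

definition blocks :: "(nat \<times> nat) set" where
  "blocks = Sigma {..<m} (\<lambda>j. {..<p j})"

definition pos :: "nat \<times> nat \<Rightarrow> nat" where
  "pos = (\<lambda>(j, k). start j + k)"

lemma start_add_le_start: "j < j' \<Longrightarrow> start j + p j \<le> start j'"
proof -
  assume "j < j'"
  then have "start (Suc j) \<le> start j'"
    unfolding start_def by (intro sum_mono2) auto
  then show ?thesis
    by (simp add: start_def)
qed

lemma start_add_less_dim: "j < m \<Longrightarrow> k < p j \<Longrightarrow> start j + k < dim"
  using start_add_le_start[of j m] by simp

lemma bij_betw_pos: "bij_betw pos blocks {..<dim}"
proof -
  have "inj_on pos blocks"
  proof (rule inj_onI, clarify)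
    fix j k j' k'
    assume "(j, k) \<in> blocks" "(j', k') \<in> blocks" "pos (j, k) = pos (j', k')"
    then show "j = j' \<and> k = k'"
      using start_add_le_start[of j j'] start_add_le_start[of j' j]
      by (cases j j' rule: linorder_cases) (auto simp: blocks_def pos_def)
  qed
  moreover have "pos ` blocks \<subseteq> {..<dim}"
    using start_add_less_dim by (auto simp: blocks_def pos_def)
  moreover have "card blocks = dim"
    by (simp add: blocks_def start_def card_SigmaI)
  ultimately show ?thesis
    by (metis bij_betw_def card_image card_lessThan card_subset_eq finite_lessThan)
qed

lemma sum_lessThan_dim: "(\<Sum>i<dim. f i) = (\<Sum>j<m. \<Sum>k<p j. f (start j + k))"
  by (simp add: sum.reindex_bij_betw[OF bij_betw_pos, symmetric] blocks_def pos_def sum.Sigma split_def)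

lemma prod_lessThan_dim: "(\<Prod>i<dim. f i) = (\<Prod>j<m. \<Prod>k<p j. f (start j + k))"
  by (simp add: prod.reindex_bij_betw[OF bij_betw_pos, symmetric] blocks_def pos_def prod.Sigma split_def)

lemma lessThan_dim_cases:
  assumes "i < dim"
  obtains j k where "j < m" and "k < p j" and "i = start j + k"
proof -
  have "i \<in> pos ` blocks"
    using bij_betw_pos assms by (simp add: bij_betw_def)
  then show ?thesis
    using that by (auto simp: blocks_def pos_def)
qed

definition slot :: "nat \<Rightarrow> nat \<times> nat" where
  "slot = inv_into blocks pos"

lemma slot_start_add: "j < m \<Longrightarrow> k < p j \<Longrightarrow> slot (start j + k) = (j, k)"
  using bij_betw_inv_into_left[OF bij_betw_pos, of "(j, k)"]
  by (simp add: slot_def blocks_def pos_def)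

definition point :: "nat \<Rightarrow> complex" where
  "point i = (if i < dim then (case slot i of (j, k) \<Rightarrow> zeta (p j) ^ Suc k) else 0)"

lemma point_start_add: "j < m \<Longrightarrow> k < p j \<Longrightarrow> point (start j + k) = zeta (p j) ^ Suc k"
  by (simp add: point_def slot_start_add start_add_less_dim)

lemma point_in_V:
  assumes "0 < dim"
  shows "point \<in> V dim d"
proof -
  have "point i ^ d = 1" if "i < dim" for i
  proof -
    obtain j k where j: "j < m" and k: "k < p j" and i: "i = start j + k"
      using lessThan_dim_cases[OF \<open>i < dim\<close>] .
    have "point i ^ d = zeta (p j) ^ (Suc k * d)"
      by (simp only: i point_start_add[OF j k] power_mult)
    also have "\<dots> = 1"
      using zeta_pow_eq_1_iff[OF block_pos[OF j]] block_dvd[OF j] by simp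
    finally show ?thesis .
  qed
  moreover have "point (dim - 1) = 1"
  proof -
    obtain l where m: "m = Suc l"
      using assms by (cases m) (auto simp: start_def)
    have l: "l < m" and p: "0 < p l"
      using block_pos m by auto
    then have "dim - 1 = start l + (p l - 1)"
      by (simp add: m start_def)
    then have "point (dim - 1) = zeta (p l) ^ p l"
      using l p point_start_add[of l "p l - 1"] by simp
    then show ?thesis
      using zeta_pow_eq_1_iff[OF p] by simp
  qed
  ultimately show ?thesis
    by (simp add: V_def point_def)
qed

definition rotation :: "(nat \<Rightarrow> nat) \<Rightarrow> nat \<Rightarrow> nat" where
  "rotation t i = (if i < dim then (case slot i of (j, k) \<Rightarrow> start j + (k + t j) mod p j) else i)"

lemma rotation_start_add:
  "j < m \<Longrightarrow> k < p j \<Longrightarrow> rotation t (start j + k) = start j + (k + t j) mod p j"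
  by (simp add: rotation_def slot_start_add start_add_less_dim)

lemma rotation_permutes: "rotation t permutes {..<dim}"
proof (rule bij_imp_permutes)
  have maps: "rotation t ` {..<dim} \<subseteq> {..<dim}"
    by (auto elim!: lessThan_dim_cases simp: rotation_start_add block_pos start_add_less_dim)
  have "inj_on (rotation t) {..<dim}"
  proof (rule inj_onI)
    fix i i' assume "i \<in> {..<dim}" "i' \<in> {..<dim}" and eq: "rotation t i = rotation t i'"
    then obtain j k j' k' where j: "j < m" "k < p j" "i = start j + k"
      and j': "j' < m" "k' < p j'" "i' = start j' + k'"
      by (auto elim!: lessThan_dim_cases)
    have "slot (rotation t i) = (j, (k + t j) mod p j)"
      and "slot (rotation t i') = (j', (k' + t j') mod p j')"
      using j j' block_pos by (simp_all add: rotation_start_add slot_start_add)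
    then have jj: "j' = j" and "[k + t j = k' + t j] (mod p j)"
      using eq by (auto simp: cong_def)
    then have "[k = k'] (mod p j)"
      by (simp add: cong_add_rcancel_nat)
    then show "i = i'"
      using j j' jj by (simp add: cong_def)
  qed
  then show "bij_betw (rotation t) {..<dim} {..<dim}"
    using endo_inj_surj[OF _ maps] by (simp add: bij_betw_def)
  show "i \<notin> {..<dim} \<Longrightarrow> rotation t i = i" for i
    by (simp add: rotation_def)
qed

lemma point_rotation_start_add:
  assumes "j < m" and "k < p j"
  shows "point (rotation t (start j + k)) = zeta (p j) ^ t j * point (start j + k)"
proof -
  have "point (rotation t (start j + k)) = zeta (p j) ^ ((k + t j) mod p j) * zeta (p j)"
    using assms block_pos by (simp add: rotation_start_add point_start_add)
  also have "\<dots> = zeta (p j) ^ t j * point (start j + k)"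
    using assms by (simp add: zeta_pow_mod block_pos point_start_add power_add)
  finally show ?thesis .
qed

definition block_degree :: "(nat \<Rightarrow> nat) \<Rightarrow> nat \<Rightarrow> nat" where
  "block_degree \<alpha> j = (\<Sum>k<p j. \<alpha> (start j + k))"

lemma monomial_point_rotation:
  "(\<Prod>i<dim. point (rotation t i) ^ \<alpha> i) =
     (\<Prod>i<dim. point i ^ \<alpha> i) * (\<Prod>j<m. zeta (p j) ^ (t j * block_degree \<alpha> j))"
proof -
  have "(\<Prod>i<dim. point (rotation t i) ^ \<alpha> i) =
      (\<Prod>j<m. \<Prod>k<p j. (zeta (p j) ^ t j * point (start j + k)) ^ \<alpha> (start j + k))"
    unfolding prod_lessThan_dim by (intro prod.cong refl) (simp add: point_rotation_start_add)
  also have "\<dots> = (\<Prod>i<dim. point i ^ \<alpha> i) * (\<Prod>j<m. zeta (p j) ^ (t j * block_degree \<alpha> j))"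
    by (simp add: prod_lessThan_dim block_degree_def power_mult_distrib prod.distrib power_sum power_mult)
  finally show ?thesis .
qed

definition shifts :: "(nat \<Rightarrow> nat) set" where
  "shifts = PiE {..<m} (\<lambda>j. {..<p j})"

lemma orbit_sum_monomial_point:
  "(\<Sum>t\<in>shifts. \<Prod>i<dim. point (rotation t i) ^ \<alpha> i) =
     (\<Prod>i<dim. point i ^ \<alpha> i) * (\<Prod>j<m. \<Sum>u<p j. zeta (p j) ^ (u * block_degree \<alpha> j))"
  by (simp add: monomial_point_rotation shifts_def prod_sum_PiE sum_distrib_left)

lemma sum_block_degree: "\<alpha> \<in> hmonos dim a \<Longrightarrow> (\<Sum>j<m. block_degree \<alpha> j) = a"
  by (simp add: hmonos_def block_degree_def sum_lessThan_dim)

lemma ex_block_degree_not_dvd: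
  assumes "\<alpha> \<in> hmonos dim a" and "a \<notin> Gamma d"
  shows "\<exists>j<m. \<not> p j dvd block_degree \<alpha> j"
  using sum_in_Gamma[of "{..<m}" p d "block_degree \<alpha>"] block_prime_factor
    sum_block_degree[OF assms(1)] assms(2)
  by auto

theorem symmetric_hpoly_vanishes_at_point:
  assumes sym: "hpoly_symmetric dim a c" and a: "a \<notin> Gamma d"
  shows "hpoly_eval dim a c point = 0"
proof (rule hpoly_eval_eq_0_if_orbit_sums_eq_0[OF sym, where T = shifts and \<sigma> = rotation])
  show "finite shifts" and "shifts \<noteq> {}"
    using block_pos by (auto simp: shifts_def finite_PiE PiE_eq_empty_iff)
  show "rotation t permutes {..<dim}" for t
    by (rule rotation_permutes)
  fix \<alpha> assume "\<alpha> \<in> hmonos dim a"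
  then obtain j where "j < m" and "\<not> p j dvd block_degree \<alpha> j"
    using ex_block_degree_not_dvd a by blast
  then have "(\<Prod>j<m. \<Sum>u<p j. zeta (p j) ^ (u * block_degree \<alpha> j)) = 0"
    using sum_zeta_pow_mult_eq_0 block_pos by (intro prod_zero) auto
  then show "(\<Sum>t\<in>shifts. \<Prod>i<dim. point (rotation t i) ^ \<alpha> i) = 0"
    by (simp add: orbit_sum_monomial_point)
qed

end

theorem proposition3p14:
  fixes n d a :: nat
  assumes "0 < n" and "0 < d" and "0 < a"
    and "n \<in> Gamma d" and "a \<notin> Gamma d"
  shows "bad_triple n d a"
proof -
  obtain ps where ps: "set ps \<subseteq> prime_factors d" "sum_list ps = n"
    using Gamma_sum_listE[OF assms(4)] by blast
  interpret prime_factor_blocks d "length ps" "(!) ps"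
    using ps(1) by unfold_locales auto
  have dim: "start (length ps) = n"
    using ps(2) by (simp add: start_def sum_list_sum_nth atLeast0LessThan)
  have "point \<in> V n d"
    using point_in_V assms(1) dim by simp
  moreover have "hpoly_eval n a c point = 0" if "hpoly_symmetric n a c" for c
    using symmetric_hpoly_vanishes_at_point that assms(5) dim by simp
  ultimately show ?thesis
    unfolding bad_triple_def good_triple_def by blast
qed

end
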